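(* Let $1<p\le2$, $\varepsilon\in(0,1]$, $\widehat\Omega\subset\mathbb{H}^n$ open and $v\in C^2(\widehat\Omega)$ with $\nabla_\varepsilon v\ne0$ in $\widehat\Omega$. If $v$ is $p$-harmonic in $\widehat\Omega$ with respect to $|\cdot|_\varepsilon$, then in $\widehat\Omega$ $$2|\nabla_\varepsilon v|_\varepsilon^2\,|\overline D^2_\varepsilon v|^2\ge\frac12\Big(1+\frac{(p-1)^2}{2n}\Big)\Big\langle\frac{\nabla_\varepsilon v}{|\nabla_\varepsilon v|_\varepsilon},\nabla_\varepsilon|\nabla_\varepsilon v|_\varepsilon^2\Big\rangle_\varepsilon^2 .$$
   Context: $\mathbb{H}^n=\mathbb{R}^{2n+1}$ with $X_i=\partial_{x_i}-\frac{y_i}2\partial_t$, $Y_i=\partial_{y_i}+\frac{x_i}2\partial_t$, $T_\varepsilon=\varepsilon\partial_t$; orthonormal frame $\{E_1,\dots,E_{2n+1}\}=\{X_1,\dots,X_n,Y_1,\dots,Y_n,T_\varepsilon\}$ of the Riemannian metric $\langle\cdot,\cdot\rangle_\varepsilon$; $\nabla_\varepsilon v=\sum_j(E_jv)E_j$; rough Hessian $\overline D^2_\varepsilon v=(E_jE_iv)_{i,j}$ with $|\overline D^2_\varepsilon v|^2=\sum_{i,j}(E_jE_iv)^2$. $p$-harmonic: $\mathrm{div}_\varepsilon(|\nabla_\varepsilon v|_\varepsilon^{p-2}\nabla_\varepsilon v)=0$ with $\mathrm{div}_\varepsilon(\sum_j\varphi_jE_j)=\sum_jE_j\varphi_j$.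 *)

theory Defs
  imports "HOL-Analysis.Analysis"
begin

text \<open>The Heisenberg group H^n = R^(2n+1) with coordinates (x,y,t), x,y in R^n.
  n is encoded by the finite index type 'n (n = CARD('n)).\<close>
type_synonym 'n heis = "(real^'n) \<times> (real^'n) \<times> real"

text \<open>Frame indices: Inl i = X_i, Inr (Inl i) = Y_i, Inr (Inr ()) = T_eps.\<close>
type_synonym 'n hidx = "'n + 'n + unit"

definition Xfield :: "'n::finite \<Rightarrow> 'n heis \<Rightarrow> 'n heis" where
  "Xfield i q = (axis i 1, 0, - (fst (snd q)) $ i / 2)"

definition Yfield :: "'n::finite \<Rightarrow> 'n heis \<Rightarrow> 'n heis" where
  "Yfield i q = (0, axis i 1, (fst q) $ i / 2)"

definition Tfield :: "real \<Rightarrow> 'n::finite heis \<Rightarrow> 'n heis" where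
  "Tfield \<epsilon> q = (0, 0, \<epsilon>)"

definition Efield :: "real \<Rightarrow> 'n::finite hidx \<Rightarrow> 'n heis \<Rightarrow> 'n heis" where
  "Efield \<epsilon> k = (case k of Inl i \<Rightarrow> Xfield i | Inr (Inl i) \<Rightarrow> Yfield i | Inr (Inr _) \<Rightarrow> Tfield \<epsilon>)"

definition Eop :: "real \<Rightarrow> 'n::finite hidx \<Rightarrow> ('n heis \<Rightarrow> real) \<Rightarrow> 'n heis \<Rightarrow> real" where
  "Eop \<epsilon> k v q = frechet_derivative v (at q) (Efield \<epsilon> k q)"

definition hgrad :: "real \<Rightarrow> ('n::finite heis \<Rightarrow> real) \<Rightarrow> 'n heis \<Rightarrow> 'n hidx \<Rightarrow> real" where
  "hgrad \<epsilon> v q = (\<lambda>k. Eop \<epsilon> k v q)"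

text \<open>Inner product and norm w.r.t. the metric making the frame orthonormal.\<close>
definition hinner :: "('n::finite hidx \<Rightarrow> real) \<Rightarrow> ('n hidx \<Rightarrow> real) \<Rightarrow> real" where
  "hinner a b = (\<Sum>k\<in>UNIV. a k * b k)"

definition hnorm :: "('n::finite hidx \<Rightarrow> real) \<Rightarrow> real" where
  "hnorm a = sqrt (hinner a a)"

definition hess_norm2 :: "real \<Rightarrow> ('n::finite heis \<Rightarrow> real) \<Rightarrow> 'n heis \<Rightarrow> real" where
  "hess_norm2 \<epsilon> v q = (\<Sum>i\<in>UNIV. \<Sum>j\<in>UNIV. (Eop \<epsilon> j (Eop \<epsilon> i v) q)\<^sup>2)"

definition p_harmonic_on :: "real \<Rightarrow> real \<Rightarrow> 'n::finite heis set \<Rightarrow> ('n heis \<Rightarrow> real) \<Rightarrow> bool" where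
  "p_harmonic_on \<epsilon> p \<Omega> v \<longleftrightarrow>
     (\<forall>q\<in>\<Omega>. (\<Sum>k\<in>UNIV. Eop \<epsilon> k (\<lambda>z. hnorm (hgrad \<epsilon> v z) powr (p - 2) * Eop \<epsilon> k v z) q) = 0)"

definition C2_on :: "'a::euclidean_space set \<Rightarrow> ('a \<Rightarrow> real) \<Rightarrow> bool" where
  "C2_on \<Omega> v \<longleftrightarrow>
     (\<exists>D1 :: 'a \<Rightarrow> 'a \<Rightarrow>\<^sub>L real. \<exists>D2 :: 'a \<Rightarrow> 'a \<Rightarrow>\<^sub>L ('a \<Rightarrow>\<^sub>L real).
        (\<forall>x\<in>\<Omega>. (v has_derivative blinfun_apply (D1 x)) (at x)) \<and>
        (\<forall>x\<in>\<Omega>. (D1 has_derivative blinfun_apply (D2 x)) (at x)) \<and>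
        continuous_on \<Omega> D1 \<and> continuous_on \<Omega> D2)"

end

theory Submission
  imports Defs
begin

text \<open>Write \<open>g = \<nabla>\<^sub>\<epsilon>v\<close>, \<open>H\<^sub>i\<^sub>j = E\<^sub>jE\<^sub>iv\<close>, \<open>s = |g|\<^sup>2\<close>, \<open>w = g\<^sup>THg\<close>.
  Expanding the p-Laplace equation by the product and chain rules gives
  \<open>tr H + (p - 2) w / s = 0\<close>. Projecting \<open>H\<close>, in the Frobenius inner product, onto the
  orthogonal matrices \<open>g g\<^sup>T\<close> and \<open>I - g g\<^sup>T / s\<close> (of squared norms \<open>s\<^sup>2\<close> and \<open>2n\<close>) gives
  \<open>|H|\<^sup>2 \<ge> (w/s)\<^sup>2 + (tr H - w/s)\<^sup>2 / 2n = (w/s)\<^sup>2 (1 + (p-1)\<^sup>2 / 2n)\<close>, and the right-hand side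
  of the theorem is \<open>2 s (w/s)\<^sup>2 (1 + (p-1)\<^sup>2 / 2n)\<close> because \<open>\<langle>g, \<nabla>\<^sub>\<epsilon>|g|\<^sup>2\<rangle> = 2w\<close>.\<close>

lemma differentiable_Efield:
  fixes q :: "'n::finite heis"
  shows "Efield \<epsilon> k differentiable (at q)"
proof -
  have y: "(\<lambda>x::'n heis. fst (snd x) $ i) differentiable at q" for i
    by (rule bounded_linear_imp_differentiable, intro bounded_linear_compose[OF bounded_linear_vec_nth]
        bounded_linear_compose[OF bounded_linear_fst] bounded_linear_snd)
  have x: "(\<lambda>x::'n heis. fst x $ i) differentiable at q" for i
    by (rule bounded_linear_imp_differentiable, intro bounded_linear_compose[OF bounded_linear_vec_nth]
        bounded_linear_fst)
  show ?thesis
    unfolding Efield_def Xfield_def Yfield_def Tfield_def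
    by (cases k rule: sum.exhaust) (auto split: sum.splits intro!: derivative_intros x y)
qed

lemma Eop_eq_derivative:
  assumes "(f has_derivative f') (at q)"
  shows "Eop \<epsilon> k f q = f' (Efield \<epsilon> k q)"
  using frechet_derivative_at[OF assms] by (simp add: Eop_def)

lemma Eop_mult:
  assumes "f differentiable at q" and "g differentiable at q"
  shows "Eop \<epsilon> k (\<lambda>z. f z * g z) q = f q * Eop \<epsilon> k g q + Eop \<epsilon> k f q * g q"
  using Eop_eq_derivative[OF has_derivative_mult[OF assms[unfolded frechet_derivative_works]]]
  by (simp add: Eop_def)

lemma Eop_sum:
  assumes "finite I" and "\<And>i. i \<in> I \<Longrightarrow> f i differentiable at q"
  shows "Eop \<epsilon> k (\<lambda>z. \<Sum>i\<in>I. f i z) q = (\<Sum>i\<in>I. Eop \<epsilon> k (f i) q)"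
proof -
  have "((\<lambda>z. \<Sum>i\<in>I. f i z) has_derivative (\<lambda>h. \<Sum>i\<in>I. frechet_derivative (f i) (at q) h)) (at q)"
    using assms by (intro has_derivative_sum) (simp add: frechet_derivative_works)
  from Eop_eq_derivative[OF this] show ?thesis by (simp add: Eop_def)
qed

lemma Eop_compose_real:
  assumes "f differentiable at q" and "(\<phi> has_real_derivative \<phi>') (at (f q))"
  shows "Eop \<epsilon> k (\<lambda>z. \<phi> (f z)) q = \<phi>' * Eop \<epsilon> k f q"
  using Eop_eq_derivative[OF DERIV_compose_FDERIV[OF assms(2) assms(1)[unfolded frechet_derivative_works]]]
  by (simp add: Eop_def)

lemma differentiable_compose_real:
  assumes "f differentiable at q" and "(\<phi> has_real_derivative \<phi>') (at (f q))"
  shows "(\<lambda>z. \<phi> (f z)) differentiable at q"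
  using DERIV_compose_FDERIV[OF assms(2) assms(1)[unfolded frechet_derivative_works]]
  by (rule differentiableI)

lemma differentiable_Eop:
  fixes v :: "'n::finite heis \<Rightarrow> real"
  assumes "open \<Omega>" and "C2_on \<Omega> v" and "q \<in> \<Omega>"
  shows "Eop \<epsilon> i v differentiable at q"
proof -
  obtain D1 :: "'n heis \<Rightarrow> 'n heis \<Rightarrow>\<^sub>L real" and D2 where
    D1: "\<forall>x\<in>\<Omega>. (v has_derivative blinfun_apply (D1 x)) (at x)" and
    D2: "\<forall>x\<in>\<Omega>. (D1 has_derivative blinfun_apply (D2 x)) (at x)"
    using assms(2) unfolding C2_on_def by blast
  have Eop_D1: "blinfun_apply (D1 z) (Efield \<epsilon> i z) = Eop \<epsilon> i v z" if "z \<in> \<Omega>" for z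
    using Eop_eq_derivative D1 that by metis
  obtain E' where E': "(Efield \<epsilon> i has_derivative E') (at q)"
    using differentiable_Efield unfolding differentiable_def by blast
  have "((\<lambda>z. blinfun_apply (D1 z) (Efield \<epsilon> i z)) has_derivative
     (\<lambda>h. blinfun_apply (D1 q) (E' h) + blinfun_apply (D2 q h) (Efield \<epsilon> i q))) (at q)"
    using bounded_bilinear.FDERIV[OF bounded_bilinear_blinfun_apply D2[rule_format, OF assms(3)] E'] .
  then have "(Eop \<epsilon> i v has_derivative
     (\<lambda>h. blinfun_apply (D1 q) (E' h) + blinfun_apply (D2 q h) (Efield \<epsilon> i q))) (at q)"
    by (rule has_derivative_transform_within_open[OF _ assms(1,3) Eop_D1])
  then show ?thesis by (rule differentiableI)
qed

lemma norm_sq_ge_orthogonal_projections: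
  fixes x a b :: "'a::real_inner"
  assumes "a \<bullet> b = 0" and "a \<noteq> 0" and "b \<noteq> 0"
  shows "(x \<bullet> a)\<^sup>2 / (norm a)\<^sup>2 + (x \<bullet> b)\<^sup>2 / (norm b)\<^sup>2 \<le> (norm x)\<^sup>2"
proof -
  define \<alpha> where "\<alpha> = (x \<bullet> a) / (a \<bullet> a)"
  define \<beta> where "\<beta> = (x \<bullet> b) / (b \<bullet> b)"
  have "b \<bullet> a = 0" using assms(1) by (simp add: inner_commute)
  have "a \<bullet> a > 0" and "b \<bullet> b > 0" using assms(2,3) by auto
  have "0 \<le> (x - \<alpha> *\<^sub>R a - \<beta> *\<^sub>R b) \<bullet> (x - \<alpha> *\<^sub>R a - \<beta> *\<^sub>R b)"
    by simp
  also have "\<dots> = x \<bullet> x - 2 * \<alpha> * (x \<bullet> a) - 2 * \<beta> * (x \<bullet> b) + \<alpha>\<^sup>2 * (a \<bullet> a) + \<beta>\<^sup>2 * (b \<bullet> b)"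
    using assms(1) \<open>b \<bullet> a = 0\<close>
    by (simp add: inner_commute[of a x] inner_commute[of b x] algebra_simps power2_eq_square)
  also have "\<dots> = x \<bullet> x - (x \<bullet> a)\<^sup>2 / (a \<bullet> a) - (x \<bullet> b)\<^sup>2 / (b \<bullet> b)"
    using \<open>a \<bullet> a > 0\<close> \<open>b \<bullet> b > 0\<close> unfolding \<alpha>_def \<beta>_def
    by (simp add: field_simps power2_eq_square)
  finally show ?thesis
    by (simp add: power2_norm_eq_inner)
qed

lemma inner_matrix:
  "(\<chi> i. \<chi> j. a i j) \<bullet> ((\<chi> i. \<chi> j. b i j) :: real^'i::finite^'i) = (\<Sum>i\<in>UNIV. \<Sum>j\<in>UNIV. a i j * b i j)"
  by (simp add: inner_vec_def)

lemma sum_sum_diagonal: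
  fixes f :: "'i::finite \<Rightarrow> 'i \<Rightarrow> real"
  shows "(\<Sum>i\<in>UNIV. \<Sum>j\<in>UNIV. (if i = j then 1 else 0) * f i j) = (\<Sum>i\<in>UNIV. f i i)"
  by (simp add: if_distrib[of "\<lambda>x. x * _"] cong: if_cong)

lemma frobenius_sq_ge_radial_trace:
  fixes H :: "'i::finite \<Rightarrow> 'i \<Rightarrow> real" and g :: "'i \<Rightarrow> real"
  assumes "g \<noteq> (\<lambda>i. 0)" and "CARD('i) \<ge> 2"
  defines "s \<equiv> \<Sum>i\<in>UNIV. g i * g i"
    and "w \<equiv> \<Sum>i\<in>UNIV. \<Sum>j\<in>UNIV. g i * g j * H i j"
    and "t \<equiv> \<Sum>i\<in>UNIV. H i i"
  shows "w\<^sup>2 / s\<^sup>2 + (t - w / s)\<^sup>2 / (real CARD('i) - 1) \<le> (\<Sum>i\<in>UNIV. \<Sum>j\<in>UNIV. (H i j)\<^sup>2)"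
proof -
  define \<delta> :: "'i \<Rightarrow> 'i \<Rightarrow> real" where "\<delta> i j = (if i = j then 1 else 0)" for i j
  define X :: "real^'i^'i" where "X = (\<chi> i. \<chi> j. H i j)"
  define A :: "real^'i^'i" where "A = (\<chi> i. \<chi> j. g i * g j)"
  define B :: "real^'i^'i" where "B = (\<chi> i. \<chi> j. \<delta> i j - g i * g j / s)"
  have s_pos: "s > 0"
  proof -
    obtain k where "g k \<noteq> 0" using assms(1) by auto
    then have "0 < g k * g k" by (auto simp: zero_less_mult_iff linorder_neq_iff)
    also have "\<dots> \<le> s" unfolding s_def by (rule member_le_sum) auto
    finally show ?thesis .
  qed
  have diag: "(\<Sum>i\<in>UNIV. \<Sum>j\<in>UNIV. \<delta> i j * f i j) = (\<Sum>i\<in>UNIV. f i i)" for f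
    unfolding \<delta>_def by (rule sum_sum_diagonal)
  have AA: "A \<bullet> A = s\<^sup>2"
    by (simp add: A_def inner_matrix s_def power2_eq_square sum_product algebra_simps)
  have XA: "X \<bullet> A = w"
    by (simp add: X_def A_def inner_matrix w_def algebra_simps)
  have XB: "X \<bullet> B = t - w / s"
    using diag[of H]
    by (simp add: X_def B_def inner_matrix right_diff_distrib sum_subtractf sum_divide_distrib
        t_def w_def algebra_simps)
  have AB: "A \<bullet> B = 0"
  proof -
    have "A \<bullet> B = (\<Sum>i\<in>UNIV. \<Sum>j\<in>UNIV. \<delta> i j * (g i * g j)) - A \<bullet> A / s"
      by (simp add: A_def B_def inner_matrix right_diff_distrib sum_subtractf sum_divide_distrib
          algebra_simps)
    also have "\<dots> = 0"
      using diag[of "\<lambda>i j. g i * g j"] s_pos by (simp add: AA s_def power2_eq_square)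
    finally show ?thesis .
  qed
  have BB: "B \<bullet> B = real CARD('i) - 1"
  proof -
    have \<delta>_sq: "\<delta> i j * \<delta> i j = \<delta> i j" for i j by (simp add: \<delta>_def)
    have "B \<bullet> B = (\<Sum>i\<in>UNIV. \<Sum>j\<in>UNIV. \<delta> i j * 1)
        - 2 * (\<Sum>i\<in>UNIV. \<Sum>j\<in>UNIV. \<delta> i j * (g i * g j)) / s + A \<bullet> A / s\<^sup>2"
      by (simp add: A_def B_def inner_matrix power2_eq_square right_diff_distrib sum_subtractf
          sum.distrib sum_divide_distrib sum_distrib_left algebra_simps \<delta>_sq)
    also have "\<dots> = real CARD('i) - 1"
      using diag[of "\<lambda>i j. g i * g j"] diag[of "\<lambda>i j. 1"] s_pos
      by (simp add: AA s_def power2_eq_square)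
    finally show ?thesis .
  qed
  have XX: "X \<bullet> X = (\<Sum>i\<in>UNIV. \<Sum>j\<in>UNIV. (H i j)\<^sup>2)"
    by (simp add: X_def inner_matrix power2_eq_square)
  have "A \<noteq> 0" using AA s_pos by auto
  moreover have "B \<noteq> 0" using BB assms(2) by auto
  ultimately have "(X \<bullet> A)\<^sup>2 / (norm A)\<^sup>2 + (X \<bullet> B)\<^sup>2 / (norm B)\<^sup>2 \<le> (norm X)\<^sup>2"
    by (rule norm_sq_ge_orthogonal_projections[OF AB])
  then show ?thesis
    unfolding power2_norm_eq_inner XA XB AA BB XX .
qed

definition rough_hessian :: "real \<Rightarrow> ('n::finite heis \<Rightarrow> real) \<Rightarrow> 'n heis \<Rightarrow> 'n hidx \<Rightarrow> 'n hidx \<Rightarrow> real"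
  where "rough_hessian \<epsilon> v q i j = Eop \<epsilon> j (Eop \<epsilon> i v) q"

lemma hess_norm2_eq: "hess_norm2 \<epsilon> v q = (\<Sum>i\<in>UNIV. \<Sum>j\<in>UNIV. (rough_hessian \<epsilon> v q i j)\<^sup>2)"
  by (simp add: hess_norm2_def rough_hessian_def)

lemma hnorm_nonneg: "hnorm a \<ge> 0"
  by (simp add: hnorm_def hinner_def sum_nonneg)

lemma hnorm_sq: "(hnorm a)\<^sup>2 = (\<Sum>k\<in>UNIV. a k * a k)"
  using hnorm_nonneg[of a] by (simp add: hnorm_def hinner_def)

lemma hnorm_powr_eq: "hnorm a powr r = ((hnorm a)\<^sup>2) powr (r / 2)"
proof (cases "hnorm a = 0")
  case False
  with hnorm_nonneg[of a] have "(hnorm a)\<^sup>2 = hnorm a powr 2" by simp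
  then show ?thesis by (simp add: powr_powr)
qed simp

lemma hnorm_pos:
  assumes "a \<noteq> (\<lambda>k. 0)"
  shows "hnorm a > 0"
proof -
  obtain k where "a k \<noteq> 0" using assms by auto
  then have "0 < a k * a k" by (auto simp: zero_less_mult_iff linorder_neq_iff)
  then have "0 < hinner a a"
    unfolding hinner_def by (rule sum_pos2[rotated 2]) auto
  then show ?thesis by (simp add: hnorm_def)
qed

lemma
  fixes v :: "'n::finite heis \<Rightarrow> real"
  assumes "open \<Omega>" and "C2_on \<Omega> v" and "q \<in> \<Omega>"
  shows differentiable_hnorm_hgrad_sq: "(\<lambda>z. (hnorm (hgrad \<epsilon> v z))\<^sup>2) differentiable at q"
    and Eop_hnorm_hgrad_sq:
      "Eop \<epsilon> j (\<lambda>z. (hnorm (hgrad \<epsilon> v z))\<^sup>2) q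
         = 2 * (\<Sum>i\<in>UNIV. hgrad \<epsilon> v q i * rough_hessian \<epsilon> v q i j)"
proof -
  have diff: "Eop \<epsilon> k v differentiable at q" for k
    using differentiable_Eop[OF assms] .
  show "(\<lambda>z. (hnorm (hgrad \<epsilon> v z))\<^sup>2) differentiable at q"
    unfolding hnorm_sq hgrad_def[of _ v] using diff by simp
  show "Eop \<epsilon> j (\<lambda>z. (hnorm (hgrad \<epsilon> v z))\<^sup>2) q
         = 2 * (\<Sum>i\<in>UNIV. hgrad \<epsilon> v q i * rough_hessian \<epsilon> v q i j)"
    unfolding hnorm_sq hgrad_def[of _ v] using diff
    by (simp add: Eop_sum Eop_mult hgrad_def rough_hessian_def sum_distrib_left algebra_simps)
qed

lemma p_harmonic_trace_eq:
  fixes v :: "'n::finite heis \<Rightarrow> real"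
  assumes "open \<Omega>" and "C2_on \<Omega> v" and "p_harmonic_on \<epsilon> p \<Omega> v"
    and "q \<in> \<Omega>" and "hgrad \<epsilon> v q \<noteq> (\<lambda>k. 0)"
  shows "(\<Sum>k\<in>UNIV. rough_hessian \<epsilon> v q k k) + (p - 2) / (hnorm (hgrad \<epsilon> v q))\<^sup>2 *
           (\<Sum>i\<in>UNIV. \<Sum>j\<in>UNIV. hgrad \<epsilon> v q i * hgrad \<epsilon> v q j * rough_hessian \<epsilon> v q i j) = 0"
    (is "?t + (p - 2) / _ * ?w = 0")
proof -
  define N where "N z = (hnorm (hgrad \<epsilon> v z))\<^sup>2" for z
  define s where "s = N q"
  define \<phi> where "\<phi> x = x powr ((p - 2) / 2)" for x :: real
  define \<phi>' where "\<phi>' = (p - 2) / 2 * \<phi> s / s"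
  have "s > 0" using hnorm_pos[OF assms(5)] by (simp add: s_def N_def)
  have \<phi>'_deriv: "(\<phi> has_real_derivative \<phi>') (at (N q))"
    using has_real_derivative_powr[OF \<open>s > 0\<close>, of "(p - 2) / 2"] \<open>s > 0\<close>
    unfolding \<phi>'_def \<phi>_def[abs_def] s_def by (simp add: powr_diff)
  have Eop_v_diff: "Eop \<epsilon> k v differentiable at q" for k
    using differentiable_Eop[OF assms(1,2,4)] .
  have N_diff: "N differentiable at q"
    unfolding N_def[abs_def] using differentiable_hnorm_hgrad_sq[OF assms(1,2,4)] .
  have Eop_N: "Eop \<epsilon> k N q = 2 * (\<Sum>i\<in>UNIV. hgrad \<epsilon> v q i * rough_hessian \<epsilon> v q i k)" for k
    unfolding N_def[abs_def] using Eop_hnorm_hgrad_sq[OF assms(1,2,4)] .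
  have Eop_flux: "Eop \<epsilon> k (\<lambda>z. \<phi> (N z) * Eop \<epsilon> k v z) q
      = \<phi> s * rough_hessian \<epsilon> v q k k + \<phi>' * Eop \<epsilon> k N q * hgrad \<epsilon> v q k" for k
    using Eop_mult[OF differentiable_compose_real[OF N_diff \<phi>'_deriv] Eop_v_diff]
      Eop_compose_real[OF N_diff \<phi>'_deriv]
    by (simp add: s_def rough_hessian_def hgrad_def)
  have "hnorm (hgrad \<epsilon> v z) powr (p - 2) = \<phi> (N z)" for z
    by (simp add: hnorm_powr_eq \<phi>_def N_def)
  then have "0 = (\<Sum>k\<in>UNIV. Eop \<epsilon> k (\<lambda>z. \<phi> (N z) * Eop \<epsilon> k v z) q)"
    using assms(3,4) by (simp add: p_harmonic_on_def)
  also have "\<dots> = \<phi> s * ?t + \<phi>' * 2 * ?w"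
    unfolding Eop_flux Eop_N
    by (simp add: sum.distrib sum_distrib_left sum_distrib_right algebra_simps)
      (subst sum.swap, simp add: algebra_simps)
  also have "\<dots> = \<phi> s * (?t + (p - 2) / s * ?w)"
    using \<open>s > 0\<close> by (simp add: \<phi>'_def field_simps)
  finally show ?thesis
    using \<open>s > 0\<close> by (simp add: \<phi>_def s_def N_def)
qed

lemma p_harmonic_hess_norm2_ge:
  fixes v :: "'n::finite heis \<Rightarrow> real"
  assumes "open \<Omega>" and "C2_on \<Omega> v" and "p_harmonic_on \<epsilon> p \<Omega> v"
    and "q \<in> \<Omega>" and "hgrad \<epsilon> v q \<noteq> (\<lambda>k. 0)"
  shows "((\<Sum>i\<in>UNIV. \<Sum>j\<in>UNIV. hgrad \<epsilon> v q i * hgrad \<epsilon> v q j * rough_hessian \<epsilon> v q i j)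
           / (hnorm (hgrad \<epsilon> v q))\<^sup>2)\<^sup>2 * (1 + (p - 1)\<^sup>2 / (2 * real CARD('n)))
         \<le> hess_norm2 \<epsilon> v q"
proof -
  let ?g = "hgrad \<epsilon> v q" and ?H = "rough_hessian \<epsilon> v q"
  define s where "s = (\<Sum>i\<in>UNIV. ?g i * ?g i)"
  define w where "w = (\<Sum>i\<in>UNIV. \<Sum>j\<in>UNIV. ?g i * ?g j * ?H i j)"
  define t where "t = (\<Sum>i\<in>UNIV. ?H i i)"
  have s_eq: "(hnorm ?g)\<^sup>2 = s" by (simp add: s_def hnorm_sq)
  have "s > 0" using hnorm_pos[OF assms(5)] s_eq by force
  have "t + (p - 2) / s * w = 0"
    using p_harmonic_trace_eq[OF assms] by (simp add: s_eq t_def w_def)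
  then have trace: "t - w / s = (1 - p) * (w / s)"
    using \<open>s > 0\<close> by (simp add: field_simps)
  have "CARD('n hidx) = 2 * CARD('n) + 1" by (simp add: card_UNIV_sum)
  then have "w\<^sup>2 / s\<^sup>2 + (t - w / s)\<^sup>2 / (2 * real CARD('n)) \<le> hess_norm2 \<epsilon> v q"
    using frobenius_sq_ge_radial_trace[OF assms(5), of ?H]
    by (simp add: hess_norm2_eq s_def w_def t_def Suc_leI)
  moreover have "(w / s)\<^sup>2 * (1 + (p - 1)\<^sup>2 / (2 * real CARD('n)))
      = w\<^sup>2 / s\<^sup>2 + (t - w / s)\<^sup>2 / (2 * real CARD('n))"
    unfolding trace using \<open>s > 0\<close> by (simp add: power2_eq_square field_simps)
  ultimately have "(w / s)\<^sup>2 * (1 + (p - 1)\<^sup>2 / (2 * real CARD('n))) \<le> hess_norm2 \<epsilon> v q"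
    by simp
  then show ?thesis
    unfolding s_eq w_def .
qed

lemma hinner_hgrad_hgrad_hnorm_sq:
  fixes v :: "'n::finite heis \<Rightarrow> real"
  assumes "open \<Omega>" and "C2_on \<Omega> v" and "q \<in> \<Omega>"
  shows "hinner (hgrad \<epsilon> v q) (hgrad \<epsilon> (\<lambda>z. (hnorm (hgrad \<epsilon> v z))\<^sup>2) q)
      = 2 * (\<Sum>i\<in>UNIV. \<Sum>j\<in>UNIV. hgrad \<epsilon> v q i * hgrad \<epsilon> v q j * rough_hessian \<epsilon> v q i j)"
proof -
  have "hgrad \<epsilon> (\<lambda>z. (hnorm (hgrad \<epsilon> v z))\<^sup>2) q j
      = 2 * (\<Sum>i\<in>UNIV. hgrad \<epsilon> v q i * rough_hessian \<epsilon> v q i j)" for j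
    using Eop_hnorm_hgrad_sq[OF assms] by (simp add: hgrad_def)
  then show ?thesis
    unfolding hinner_def by (subst sum.swap) (simp add: sum_distrib_left algebra_simps)
qed

theorem lemma6p5:
  fixes v :: "'n::finite heis \<Rightarrow> real" and \<Omega> :: "'n heis set" and p \<epsilon> :: real
  assumes "1 < p" and "p \<le> 2" and "0 < \<epsilon>" and "\<epsilon> \<le> 1"
    and "open \<Omega>" and "C2_on \<Omega> v"
    and "\<forall>q\<in>\<Omega>. hgrad \<epsilon> v q \<noteq> (\<lambda>k. 0)"
    and "p_harmonic_on \<epsilon> p \<Omega> v"
    and "q \<in> \<Omega>"
  shows "2 * (hnorm (hgrad \<epsilon> v q))\<^sup>2 * hess_norm2 \<epsilon> v q \<ge>
         1/2 * (1 + (p - 1)\<^sup>2 / (2 * real CARD('n))) *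
         (hinner (\<lambda>k. hgrad \<epsilon> v q k / hnorm (hgrad \<epsilon> v q))
                 (hgrad \<epsilon> (\<lambda>z. (hnorm (hgrad \<epsilon> v z))\<^sup>2) q))\<^sup>2"
proof -
  let ?g = "hgrad \<epsilon> v q" and ?c = "1 + (p - 1)\<^sup>2 / (2 * real CARD('n))"
  define w where "w = (\<Sum>i\<in>UNIV. \<Sum>j\<in>UNIV. ?g i * ?g j * rough_hessian \<epsilon> v q i j)"
  have "?g \<noteq> (\<lambda>k. 0)" using assms(7,9) by blast
  then have "hnorm ?g > 0" by (rule hnorm_pos)
  have inner: "hinner (\<lambda>k. ?g k / hnorm ?g) (hgrad \<epsilon> (\<lambda>z. (hnorm (hgrad \<epsilon> v z))\<^sup>2) q)
      = 2 * w / hnorm ?g"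
    using hinner_hgrad_hgrad_hnorm_sq[OF assms(5,6,9), of \<epsilon>]
    by (simp add: hinner_def sum_divide_distrib[symmetric] w_def)
  have "1/2 * ?c * (2 * w / hnorm ?g)\<^sup>2 = 2 * (hnorm ?g)\<^sup>2 * ((w / (hnorm ?g)\<^sup>2)\<^sup>2 * ?c)"
    using \<open>hnorm ?g > 0\<close> by (simp add: power2_eq_square field_simps)
  also have "\<dots> \<le> 2 * (hnorm ?g)\<^sup>2 * hess_norm2 \<epsilon> v q"
    using p_harmonic_hess_norm2_ge[OF assms(5,6,8,9) \<open>?g \<noteq> (\<lambda>k. 0)\<close>]
    by (auto intro: mult_left_mono simp: w_def)
  finally show ?thesis
    unfolding inner .
qed

end
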